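(* Let $n,k$ be integers with $2<2k\le n$. The feasible set of the integer program $( * )$ is non-empty if and only if $\mathrm{Pet}(n,k)$ contains an odd cycle. Moreover, suppose $(\mathsf{u},\mathsf{v}_+,\mathsf{v}_-,r,t)$ is a solution of $( * )$. If $( * )$ has some trivial solution, then $g_{odd}(\mathrm{Pet}(n,k))=2r+1$; if all solutions of $( * )$ are nontrivial, then $g_{odd}(\mathrm{Pet}(n,k))=2r+3$.
   Context: For integers $n,k$ with $2<2k\le n$, the generalized Petersen graph $\mathrm{Pet}(n,k)$ has vertex set $\{u_0,\dots,u_{n-1}\}\cup\{v_0,\dots,v_{n-1}\}$ and edge set $\{u_iu_{i+1}\}\cup\{u_iv_i\}\cup\{v_iv_{i+k}\}$, indices modulo $n$. The integer program $( * )$ is: minimize $\mathsf{u}+\mathsf{v}_++\mathsf{v}_-$ over integers $\mathsf{u},\mathsf{v}_+,\mathsf{v}_-,r\ge 0$ and $t\in\mathbb{Z}$ subject to $\mathsf{u}+k(\mathsf{v}_+-\mathsf{v}_-)=tn$ and $\mathsf{u}+\mathsf{v}_++\mathsf{v}_-=2r+1$. A feasible point is any tuple satisfying these constraints; a solution is a minimizer; a solution is trivial if $\mathsf{u}=0$ or $\mathsf{v}_++\mathsf{v}_-=0$, and nontrivial otherwise (note all solutions have the same value $2r+1$). $g_{odd}(G)$ is the length of a shortest odd cycle of $G$. *)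

theory Defs
  imports Main
begin

text \<open>Generalized Petersen graph Pet(n,k). Vertex (False,i) is u_i, vertex (True,i) is v_i,
  for 0 \<le> i < n. Indices are taken modulo n.\<close>

definition pet_verts :: "nat \<Rightarrow> (bool \<times> nat) set" where
  "pet_verts n = {x. snd x < n}"

definition pet_adj :: "nat \<Rightarrow> nat \<Rightarrow> bool \<times> nat \<Rightarrow> bool \<times> nat \<Rightarrow> bool" where
  "pet_adj n k x y \<longleftrightarrow> x \<in> pet_verts n \<and> y \<in> pet_verts n \<and>
     ((\<not> fst x \<and> \<not> fst y \<and> (snd y = (snd x + 1) mod n \<or> snd x = (snd y + 1) mod n))
    \<or> (fst x \<noteq> fst y \<and> snd x = snd y)
    \<or> (fst x \<and> fst y \<and> (snd y = (snd x + k) mod n \<or> snd x = (snd y + k) mod n)))"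

definition is_cycle :: "('a \<Rightarrow> 'a \<Rightarrow> bool) \<Rightarrow> 'a list \<Rightarrow> bool" where
  "is_cycle adj c \<longleftrightarrow> length c \<ge> 3 \<and> distinct c \<and>
     (\<forall>i < length c. adj (c ! i) (c ! ((i + 1) mod length c)))"

definition has_odd_cycle :: "('a \<Rightarrow> 'a \<Rightarrow> bool) \<Rightarrow> bool" where
  "has_odd_cycle adj \<longleftrightarrow> (\<exists>c. is_cycle adj c \<and> odd (length c))"

definition odd_girth :: "('a \<Rightarrow> 'a \<Rightarrow> bool) \<Rightarrow> nat" where
  "odd_girth adj = (LEAST L. \<exists>c. is_cycle adj c \<and> odd (length c) \<and> length c = L)"

definition ip_feasible :: "nat \<Rightarrow> nat \<Rightarrow> nat \<Rightarrow> nat \<Rightarrow> nat \<Rightarrow> nat \<Rightarrow> int \<Rightarrow> bool" where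
  "ip_feasible n k u vp vm r t \<longleftrightarrow>
     int u + int k * (int vp - int vm) = t * int n \<and> u + vp + vm = 2 * r + 1"

definition ip_solution :: "nat \<Rightarrow> nat \<Rightarrow> nat \<Rightarrow> nat \<Rightarrow> nat \<Rightarrow> nat \<Rightarrow> int \<Rightarrow> bool" where
  "ip_solution n k u vp vm r t \<longleftrightarrow> ip_feasible n k u vp vm r t \<and>
     (\<forall>u' vp' vm' r' t'. ip_feasible n k u' vp' vm' r' t' \<longrightarrow> u + vp + vm \<le> u' + vp' + vm')"

definition ip_trivial :: "nat \<Rightarrow> nat \<Rightarrow> nat \<Rightarrow> bool" where
  "ip_trivial u vp vm \<longleftrightarrow> u = 0 \<or> vp + vm = 0"

end

theory Submission
  imports Defs
begin

text \<open>Every edge of Pet(n,k) moves one step along the outer rim, k steps along the inner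
  rims, or is a spoke. Summing the signed rim steps U and inner steps V around a cycle of
  length L gives n | U + kV and |U| + |V| \<le> L - S, where the number S of spokes is even;
  so |U| + |V| has the parity of L. Hence every odd cycle yields an odd pair (U,V), and it
  yields a trivial pair (U = 0 or V = 0) unless S \<ge> 2. Up to signs, points of (*) are
  such pairs, so the optimum 2r+1 is the least odd |U| + |V| with n | U + kV.
  Conversely an optimal pair is realised by a cycle: on the inner rims or the outer rim
  if it is trivial, and otherwise by |U| outer steps, a spoke, |V| inner steps and a spoke
  back; optimality of the pair keeps all these vertices distinct.\<close>

section \<open>Sums along cycles\<close>

lemma is_cycle_map:
  assumes "3 \<le> N" "inj_on f {..<N}" "\<And>i. i < N \<Longrightarrow> adj (f i) (f ((i + 1) mod N))"
  shows "is_cycle adj (map f [0..<N])"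
  using assms by (simp add: is_cycle_def distinct_map lessThan_atLeast0)

lemma odd_girth_eqI:
  assumes "is_cycle adj c" "odd (length c)"
    and "\<And>c'. is_cycle adj c' \<Longrightarrow> odd (length c') \<Longrightarrow> length c \<le> length c'"
  shows "odd_girth adj = length c"
  unfolding odd_girth_def by (rule Least_equality) (use assms in auto)

definition cycle_sum :: "('a \<Rightarrow> 'a \<Rightarrow> int) \<Rightarrow> 'a list \<Rightarrow> int" where
  "cycle_sum f c = (\<Sum>i<length c. f (c ! i) (c ! ((i + 1) mod length c)))"

lemma sum_lessThan_rotate:
  fixes g :: "nat \<Rightarrow> 'a::comm_monoid_add"
  shows "(\<Sum>i<L. g ((i + 1) mod L)) = (\<Sum>i<L. g i)"
proof (cases L)
  case (Suc M)
  have "(\<Sum>i<Suc M. g ((i + 1) mod Suc M)) = (\<Sum>i<M. g (Suc i)) + g 0"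
    by (simp add: sum.lessThan_Suc)
  also have "\<dots> = (\<Sum>i<Suc M. g i)"
    by (subst sum.lessThan_Suc_shift) (simp add: add.commute)
  finally show ?thesis using Suc by simp
qed simp

lemma cycle_sum_rotate: "cycle_sum (\<lambda>x y. g y) c = cycle_sum (\<lambda>x y. g x) c"
  using sum_lessThan_rotate[of "\<lambda>i. g (c ! i)" "length c"] by (simp add: cycle_sum_def)

lemma cycle_sum_add: "cycle_sum (\<lambda>x y. f x y + g x y) c = cycle_sum f c + cycle_sum g c"
  by (simp add: cycle_sum_def sum.distrib)

lemma cycle_sum_diff: "cycle_sum (\<lambda>x y. f x y - g x y) c = cycle_sum f c - cycle_sum g c"
  by (simp add: cycle_sum_def sum_subtractf)

lemma cycle_sum_cmult: "cycle_sum (\<lambda>x y. a * f x y) c = a * cycle_sum f c"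
  by (simp add: cycle_sum_def sum_distrib_left)

lemma cycle_sum_cong:
  assumes "is_cycle adj c" "\<And>x y. adj x y \<Longrightarrow> f x y = g x y"
  shows "cycle_sum f c = cycle_sum g c"
  using assms unfolding cycle_sum_def is_cycle_def by (intro sum.cong) auto

lemma dvd_cycle_sum:
  assumes "is_cycle adj c" "\<And>x y. adj x y \<Longrightarrow> d dvd f x y"
  shows "d dvd cycle_sum f c"
  using assms unfolding cycle_sum_def is_cycle_def by (intro dvd_sum) auto

lemma abs_cycle_sum_le: "\<bar>cycle_sum f c\<bar> \<le> cycle_sum (\<lambda>x y. \<bar>f x y\<bar>) c"
  unfolding cycle_sum_def by (rule sum_abs)

lemma cycle_sum_nonneg: "(\<And>x y. 0 \<le> f x y) \<Longrightarrow> 0 \<le> cycle_sum f c"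
  unfolding cycle_sum_def by (simp add: sum_nonneg)

lemma cycle_sum_eq_0_imp_edges_0:
  assumes "\<And>x y. 0 \<le> f x y" "cycle_sum f c = 0" "i < length c"
  shows "f (c ! i) (c ! ((i + 1) mod length c)) = 0"
  using assms unfolding cycle_sum_def by (subst (asm) sum_nonneg_eq_0_iff) auto

lemma cycle_invariant:
  assumes "\<And>i. i < length c \<Longrightarrow> g (c ! i) = g (c ! ((i + 1) mod length c))" "i < length c"
  shows "g (c ! i) = g (c ! 0)"
  using assms(2)
proof (induction i)
  case (Suc i)
  then show ?case using assms(1)[of i] by simp
qed simp

section \<open>Odd combinations and the integer program\<close>

text \<open>A point (u, v+, v-) of (*) corresponds to the pair (u, v+ - v-); at an optimum
  v+ or v- vanishes.\<close>

definition odd_combination :: "nat \<Rightarrow> nat \<Rightarrow> int \<Rightarrow> int \<Rightarrow> bool" where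
  "odd_combination n k U V \<longleftrightarrow> int n dvd U + int k * V \<and> odd (\<bar>U\<bar> + \<bar>V\<bar>)"

definition min_odd_combination :: "nat \<Rightarrow> nat \<Rightarrow> int \<Rightarrow> int \<Rightarrow> bool" where
  "min_odd_combination n k U V \<longleftrightarrow> odd_combination n k U V \<and>
     (\<forall>U' V'. odd_combination n k U' V' \<longrightarrow> \<bar>U\<bar> + \<bar>V\<bar> \<le> \<bar>U'\<bar> + \<bar>V'\<bar>)"

lemma odd_combination_uminus [simp]:
  "odd_combination n k (- U) (- V) \<longleftrightarrow> odd_combination n k U V"
proof -
  have "- U + int k * - V = - (U + int k * V)" by simp
  then show ?thesis unfolding odd_combination_def by (simp only: dvd_minus_iff abs_minus_cancel)
qed

lemma min_odd_combination_uminus [simp]: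
  "min_odd_combination n k (- U) (- V) \<longleftrightarrow> min_odd_combination n k U V"
  unfolding min_odd_combination_def by simp

lemma min_odd_combination_le:
  "min_odd_combination n k U V \<Longrightarrow> odd_combination n k U' V' \<Longrightarrow> \<bar>U\<bar> + \<bar>V\<bar> \<le> \<bar>U'\<bar> + \<bar>V'\<bar>"
  unfolding min_odd_combination_def by blast

lemma min_odd_combination_exists:
  assumes "odd_combination n k U V"
  shows "\<exists>U V. min_odd_combination n k U V"
proof -
  obtain U0 V0 where comb: "odd_combination n k U0 V0"
    and least: "\<And>U' V'. odd_combination n k U' V' \<Longrightarrow>
                   nat (\<bar>U0\<bar> + \<bar>V0\<bar>) \<le> nat (\<bar>U'\<bar> + \<bar>V'\<bar>)"
    using ex_has_least_nat[of "\<lambda>(U, V). odd_combination n k U V" "(U, V)"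
        "\<lambda>(U, V). nat (\<bar>U\<bar> + \<bar>V\<bar>)"] assms
    by auto
  have "\<bar>U0\<bar> + \<bar>V0\<bar> \<le> \<bar>U'\<bar> + \<bar>V'\<bar>" if "odd_combination n k U' V'" for U' V'
    using least[OF that] by (simp add: nat_le_eq_zle)
  then show ?thesis
    unfolding min_odd_combination_def using comb by blast
qed

lemma ip_feasible_imp_odd_combination:
  assumes "ip_feasible n k u vp vm r t"
  shows "odd_combination n k (int u) (int vp - int vm)"
proof -
  have "int n dvd int u + int k * (int vp - int vm)"
    using assms unfolding ip_feasible_def by simp
  moreover have "odd (int u + \<bar>int vp - int vm\<bar>)"
    using assms unfolding ip_feasible_def by (simp add: abs_if) presburger
  ultimately show ?thesis unfolding odd_combination_def by simp
qed

lemma odd_combination_imp_ip_feasible: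
  assumes "odd_combination n k U V"
  shows "\<exists>u vp vm r t. ip_feasible n k u vp vm r t \<and> int u = \<bar>U\<bar> \<and> int vp + int vm = \<bar>V\<bar>"
proof -
  have "\<exists>u vp vm r t. ip_feasible n k u vp vm r t \<and> int u = \<bar>U\<bar> \<and> int vp + int vm = \<bar>V\<bar>"
    if comb: "odd_combination n k U V" and U_nonneg: "0 \<le> U" for U V
  proof -
    obtain t where t: "U + int k * V = t * int n"
      using comb unfolding odd_combination_def by (metis dvdE mult.commute)
    define r where "r = nat ((\<bar>U\<bar> + \<bar>V\<bar>) div 2)"
    have r: "\<bar>U\<bar> + \<bar>V\<bar> = 2 * int r + 1"
      using comb unfolding odd_combination_def r_def by simp
    have "nat U + nat V + nat (- V) = 2 * r + 1"
      using r U_nonneg by arith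
    then have "ip_feasible n k (nat U) (nat V) (nat (- V)) r t"
      using t U_nonneg unfolding ip_feasible_def by auto
    then show ?thesis using U_nonneg by fastforce
  qed
  from this[of U V] this[of "- U" "- V"] assms show ?thesis
    by (cases "0 \<le> U") simp_all
qed

lemma ip_solution_imp_min_odd_combination:
  assumes sol: "ip_solution n k u vp vm r t"
  shows "min_odd_combination n k (int u) (int vp - int vm)"
    and "\<bar>int vp - int vm\<bar> = int vp + int vm"
proof -
  have comb: "odd_combination n k (int u) (int vp - int vm)"
    using sol ip_feasible_imp_odd_combination unfolding ip_solution_def by blast
  have le: "int u + int vp + int vm \<le> \<bar>U\<bar> + \<bar>V\<bar>" if comb_UV: "odd_combination n k U V" for U V
  proof -
    obtain u' vp' vm' r' t' where "ip_feasible n k u' vp' vm' r' t'"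
      and "int u' = \<bar>U\<bar>" "int vp' + int vm' = \<bar>V\<bar>"
      using odd_combination_imp_ip_feasible[OF comb_UV] by blast
    with sol show ?thesis unfolding ip_solution_def by fastforce
  qed
  from le[OF comb] show abs_eq: "\<bar>int vp - int vm\<bar> = int vp + int vm" by simp
  show "min_odd_combination n k (int u) (int vp - int vm)"
    unfolding min_odd_combination_def using comb le abs_eq by (simp add: add.assoc)
qed

lemma min_odd_combination_imp_ip_solution:
  assumes min: "min_odd_combination n k U V"
  shows "\<exists>u vp vm r t. ip_solution n k u vp vm r t \<and> int u = \<bar>U\<bar> \<and> int vp + int vm = \<bar>V\<bar>"
proof -
  obtain u vp vm r t where feas: "ip_feasible n k u vp vm r t"
    and uv: "int u = \<bar>U\<bar>" "int vp + int vm = \<bar>V\<bar>"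
    using odd_combination_imp_ip_feasible min unfolding min_odd_combination_def by blast
  have "u + vp + vm \<le> u' + vp' + vm'" if "ip_feasible n k u' vp' vm' r' t'" for u' vp' vm' r' t'
    using min_odd_combination_le[OF min ip_feasible_imp_odd_combination[OF that]] uv by linarith
  then show ?thesis using feas uv unfolding ip_solution_def by blast
qed

lemma ex_ip_feasible_iff:
  "(\<exists>u vp vm r t. ip_feasible n k u vp vm r t) \<longleftrightarrow> (\<exists>U V. odd_combination n k U V)"
  using ip_feasible_imp_odd_combination odd_combination_imp_ip_feasible by meson

lemma ex_trivial_ip_solution_iff:
  "(\<exists>u vp vm r t. ip_solution n k u vp vm r t \<and> ip_trivial u vp vm) \<longleftrightarrow>
   (\<exists>U V. min_odd_combination n k U V \<and> (U = 0 \<or> V = 0))"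
proof
  assume "\<exists>u vp vm r t. ip_solution n k u vp vm r t \<and> ip_trivial u vp vm"
  then obtain u vp vm r t where sol: "ip_solution n k u vp vm r t" and "u = 0 \<or> vp + vm = 0"
    unfolding ip_trivial_def by blast
  then have "int u = 0 \<or> int vp - int vm = 0" by auto
  with ip_solution_imp_min_odd_combination(1)[OF sol]
  show "\<exists>U V. min_odd_combination n k U V \<and> (U = 0 \<or> V = 0)" by blast
next
  assume "\<exists>U V. min_odd_combination n k U V \<and> (U = 0 \<or> V = 0)"
  then show "\<exists>u vp vm r t. ip_solution n k u vp vm r t \<and> ip_trivial u vp vm"
    unfolding ip_trivial_def using min_odd_combination_imp_ip_solution by fastforce
qed

lemma min_odd_combination_inner_multiple:
  assumes min: "min_odd_combination n k U V"
    and e: "0 < e" "e \<le> \<bar>V\<bar>" and dvd: "int n dvd int k * e"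
  shows "U = 0 \<and> e = \<bar>V\<bar>"
proof (cases "odd e")
  case True
  then have "odd_combination n k 0 e" using dvd e unfolding odd_combination_def by simp
  from min_odd_combination_le[OF min this] e show ?thesis by arith
next
  case False
  define V' where "V' = V - sgn V * e"
  have abs_V': "\<bar>V'\<bar> = \<bar>V\<bar> - e" using e unfolding V'_def by (auto simp: sgn_if)
  have comb: "odd_combination n k U V" using min unfolding min_odd_combination_def by blast
  have "U + int k * V' = (U + int k * V) - sgn V * (int k * e)"
    unfolding V'_def by (simp add: algebra_simps)
  then have "int n dvd U + int k * V'"
    using comb dvd unfolding odd_combination_def by (metis dvd_diff dvd_mult)
  moreover have "odd (\<bar>U\<bar> + \<bar>V'\<bar>)"
    using comb False abs_V' unfolding odd_combination_def by simp
  ultimately have "odd_combination n k U V'" unfolding odd_combination_def by blast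
  from min_odd_combination_le[OF min this] abs_V' e show ?thesis by simp
qed

lemma min_odd_combination_outer_bound:
  assumes min: "min_odd_combination n k U V" and "V \<noteq> 0" "0 < n"
  shows "\<bar>U\<bar> < int n"
proof (rule ccontr)
  assume "\<not> \<bar>U\<bar> < int n"
  then have large: "int n \<le> \<bar>U\<bar>" by simp
  have comb: "odd_combination n k U V" using min unfolding min_odd_combination_def by blast
  show False
  proof (cases "odd n")
    case True
    then have "odd_combination n k (int n) 0" unfolding odd_combination_def by simp
    from min_odd_combination_le[OF min this] large \<open>V \<noteq> 0\<close> show False by simp
  next
    case False
    define U' where "U' = U - sgn U * int n"
    have abs_U': "\<bar>U'\<bar> = \<bar>U\<bar> - int n"
      using large \<open>0 < n\<close> unfolding U'_def by (auto simp: sgn_if)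
    have "U' + int k * V = (U + int k * V) - sgn U * int n"
      unfolding U'_def by (simp add: algebra_simps)
    then have "int n dvd U' + int k * V"
      using comb unfolding odd_combination_def by (metis dvd_diff dvd_triv_right)
    moreover have "odd (\<bar>U'\<bar> + \<bar>V\<bar>)"
      using comb False abs_U' unfolding odd_combination_def by simp
    ultimately have "odd_combination n k U' V" unfolding odd_combination_def by blast
    from min_odd_combination_le[OF min this] abs_U' \<open>0 < n\<close> show False by simp
  qed
qed

section \<open>Odd cycles give odd combinations\<close>

definition rim_step :: "nat \<Rightarrow> bool \<times> nat \<Rightarrow> bool \<times> nat \<Rightarrow> int" where
  "rim_step n x y =
     (if \<not> fst x \<and> \<not> fst y then if snd y = (snd x + 1) mod n then 1 else -1 else 0)"

definition inner_step :: "nat \<Rightarrow> nat \<Rightarrow> bool \<times> nat \<Rightarrow> bool \<times> nat \<Rightarrow> int" where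
  "inner_step n k x y =
     (if fst x \<and> fst y then if snd y = (snd x + k) mod n then 1 else -1 else 0)"

definition spoke :: "bool \<times> nat \<Rightarrow> bool \<times> nat \<Rightarrow> int" where
  "spoke x y = of_bool (fst x \<noteq> fst y)"

lemma int_dvd_mod_add: "int n dvd int ((a + b) mod n) - int a - int b"
proof -
  have "int ((a + b) mod n) + int n * int ((a + b) div n) = int a + int b"
    by (metis mod_mult_div_eq of_nat_add of_nat_mult)
  then have "int ((a + b) mod n) - int a - int b = - (int n * int ((a + b) div n))"
    by linarith
  then show ?thesis by simp
qed

lemma pet_adj_step_dvd:
  assumes "pet_adj n k x y"
  shows "int n dvd int (snd y) - int (snd x) - rim_step n x y - int k * inner_step n k x y"
proof -
  have fwd: "int n dvd int (snd y) - int (snd x) - int d" if "snd y = (snd x + d) mod n" for d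
    using int_dvd_mod_add[of n "snd x" d] unfolding that[symmetric] by simp
  have bwd: "int n dvd int (snd y) - int (snd x) + int d" if "snd x = (snd y + d) mod n" for d
  proof -
    have "int n dvd - (int (snd x) - int (snd y) - int d)"
      using int_dvd_mod_add[of n "snd y" d] unfolding that[symmetric] by (simp only: dvd_minus_iff)
    then show ?thesis by (simp add: algebra_simps)
  qed
  from assms consider
      (rim_fwd) "\<not> fst x" "\<not> fst y" "snd y = (snd x + 1) mod n"
    | (rim_bwd) "\<not> fst x" "\<not> fst y" "snd y \<noteq> (snd x + 1) mod n" "snd x = (snd y + 1) mod n"
    | (spoke) "fst x \<noteq> fst y" "snd x = snd y"
    | (inner_fwd) "fst x" "fst y" "snd y = (snd x + k) mod n"
    | (inner_bwd) "fst x" "fst y" "snd y \<noteq> (snd x + k) mod n" "snd x = (snd y + k) mod n"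
    unfolding pet_adj_def by blast
  then show ?thesis
  proof cases
    case rim_fwd
    with fwd[of 1] show ?thesis by (simp add: rim_step_def inner_step_def)
  next
    case rim_bwd
    with bwd[of 1] show ?thesis by (simp add: rim_step_def inner_step_def)
  next
    case spoke
    then show ?thesis by (simp add: rim_step_def inner_step_def)
  next
    case inner_fwd
    with fwd[of k] show ?thesis by (simp add: rim_step_def inner_step_def)
  next
    case inner_bwd
    with bwd[of k] show ?thesis by (simp add: rim_step_def inner_step_def)
  qed
qed

lemma pet_adj_step_count:
  "pet_adj n k x y \<Longrightarrow> \<bar>rim_step n x y\<bar> + \<bar>inner_step n k x y\<bar> + spoke x y = 1"
  unfolding pet_adj_def rim_step_def inner_step_def spoke_def by auto

lemma spoke_parity: "even (spoke x y - (of_bool (fst y) - of_bool (fst x)))"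
  unfolding spoke_def by auto

lemma even_abs_diff: "even (\<bar>x\<bar> - x :: int)"
  by (simp add: abs_if)

lemma pet_cycle_without_spokes:
  assumes cyc: "is_cycle (pet_adj n k) c" and no_spoke: "cycle_sum spoke c = 0"
  shows "cycle_sum (rim_step n) c = 0 \<or> cycle_sum (inner_step n k) c = 0"
proof -
  have "fst (c ! i) = fst (c ! ((i + 1) mod length c))" if "i < length c" for i
    using cycle_sum_eq_0_imp_edges_0[of spoke c i] no_spoke that by (simp add: spoke_def)
  then have same: "fst (c ! i) = fst (c ! 0)" if "i < length c" for i
    using cycle_invariant[where g = fst] that by blast
  have "0 < length c" using cyc unfolding is_cycle_def by auto
  then have edge: "fst (c ! i) = fst (c ! 0) \<and> fst (c ! ((i + 1) mod length c)) = fst (c ! 0)"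
    if "i < length c" for i
    using same[OF that] same[of "(i + 1) mod length c"] by simp
  show ?thesis
  proof (cases "fst (c ! 0)")
    case True
    then have "cycle_sum (rim_step n) c = 0"
      unfolding cycle_sum_def rim_step_def using edge by (intro sum.neutral) auto
    then show ?thesis ..
  next
    case False
    then have "cycle_sum (inner_step n k) c = 0"
      unfolding cycle_sum_def inner_step_def using edge by (intro sum.neutral) auto
    then show ?thesis ..
  qed
qed

lemma pet_cycle_closes:
  assumes cyc: "is_cycle (pet_adj n k) c"
  shows "int n dvd cycle_sum (rim_step n) c + int k * cycle_sum (inner_step n k) c"
proof -
  have "int n dvd cycle_sum
      (\<lambda>x y. int (snd y) - int (snd x) - rim_step n x y - int k * inner_step n k x y) c"
    by (rule dvd_cycle_sum[OF cyc]) (rule pet_adj_step_dvd)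
  then have "int n dvd - (cycle_sum (rim_step n) c + int k * cycle_sum (inner_step n k) c)"
    unfolding cycle_sum_diff cycle_sum_cmult cycle_sum_rotate by simp
  then show ?thesis by (metis dvd_minus_iff minus_add_distrib diff_conv_add_uminus)
qed

lemma pet_cycle_spokes_even:
  assumes cyc: "is_cycle (pet_adj n k) c"
  shows "even (cycle_sum spoke c)"
proof -
  have "even (cycle_sum (\<lambda>x y. spoke x y - (of_bool (fst y) - of_bool (fst x))) c)"
    by (rule dvd_cycle_sum[OF cyc]) (rule spoke_parity)
  then show ?thesis unfolding cycle_sum_diff cycle_sum_rotate by simp
qed

lemma pet_cycle_length:
  assumes cyc: "is_cycle (pet_adj n k) c"
  shows "cycle_sum (\<lambda>x y. \<bar>rim_step n x y\<bar>) c + cycle_sum (\<lambda>x y. \<bar>inner_step n k x y\<bar>) c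
      + cycle_sum spoke c = int (length c)"
proof -
  have "cycle_sum (\<lambda>x y. \<bar>rim_step n x y\<bar> + \<bar>inner_step n k x y\<bar> + spoke x y) c
      = cycle_sum (\<lambda>_ _. 1) c"
    by (rule cycle_sum_cong[OF cyc]) (rule pet_adj_step_count)
  then show ?thesis unfolding cycle_sum_add by (simp add: cycle_sum_def)
qed

lemma pet_odd_cycle_combination:
  assumes cyc: "is_cycle (pet_adj n k) c" and odd_len: "odd (length c)"
  shows "\<exists>U V. odd_combination n k U V \<and> \<bar>U\<bar> + \<bar>V\<bar> \<le> int (length c)
           \<and> (U = 0 \<or> V = 0 \<or> \<bar>U\<bar> + \<bar>V\<bar> + 2 \<le> int (length c))"
proof -
  define U where "U = cycle_sum (rim_step n) c"
  define V where "V = cycle_sum (inner_step n k) c"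
  define S where "S = cycle_sum spoke c"
  define A where "A = cycle_sum (\<lambda>x y. \<bar>rim_step n x y\<bar>) c"
  define B where "B = cycle_sum (\<lambda>x y. \<bar>inner_step n k x y\<bar>) c"
  have len: "A + B + S = int (length c)"
    using pet_cycle_length[OF cyc] unfolding A_def B_def S_def .
  have dvd: "int n dvd U + int k * V" using pet_cycle_closes[OF cyc] unfolding U_def V_def .
  have even_S: "even S" using pet_cycle_spokes_even[OF cyc] unfolding S_def .
  have "even (A - U)" "even (B - V)"
    unfolding A_def B_def U_def V_def cycle_sum_diff[symmetric]
    by (rule dvd_cycle_sum[OF cyc], rule even_abs_diff)+
  moreover have "odd (A + B)"
    using len odd_len even_S by (metis even_add even_of_nat_iff)
  ultimately have odd_UV: "odd (\<bar>U\<bar> + \<bar>V\<bar>)" by simp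
  have "\<bar>U\<bar> \<le> A" "\<bar>V\<bar> \<le> B" "0 \<le> S"
    unfolding U_def V_def A_def B_def S_def spoke_def
    by (simp_all add: abs_cycle_sum_le cycle_sum_nonneg)
  moreover have "S = 0 \<or> 2 \<le> S"
    using even_S \<open>0 \<le> S\<close> by presburger
  moreover have "U = 0 \<or> V = 0" if "S = 0"
    using pet_cycle_without_spokes[OF cyc] that unfolding U_def V_def S_def by blast
  ultimately show ?thesis
    using dvd odd_UV len unfolding odd_combination_def by (intro exI[of _ U] exI[of _ V]) linarith
qed

section \<open>Optimal combinations give short odd cycles\<close>

lemma inj_on_mod_progression:
  fixes a h m n :: nat
  assumes "\<And>e. 0 < e \<Longrightarrow> e \<le> m \<Longrightarrow> \<not> n dvd e * h"
  shows "inj_on (\<lambda>i. (a + i * h) mod n) {..m}"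
proof (rule linorder_inj_onI')
  fix i j assume "i \<in> {..m}" "j \<in> {..m}" "i < j"
  then have "\<not> n dvd (j - i) * h" using assms by simp
  moreover have "(a + j * h) - (a + i * h) = (j - i) * h" by (simp add: diff_mult_distrib)
  moreover have "a + i * h \<le> a + j * h" using \<open>i < j\<close> by simp
  ultimately show "(a + i * h) mod n \<noteq> (a + j * h) mod n"
    by (metis mod_eq_dvd_iff_nat)
qed

lemma pet_adj_inner_step:
  assumes "h = k \<or> h = n - k" "k < n"
  shows "pet_adj n k (True, a mod n) (True, (a + h) mod n)"
  using assms(1)
proof
  assume "h = k"
  then show ?thesis using assms(2) unfolding pet_adj_def pet_verts_def by (simp add: mod_add_left_eq)
next
  assume "h = n - k"
  then have "((a + h) mod n + k) mod n = a mod n"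
    using assms(2) by (simp add: mod_add_left_eq)
  then show ?thesis using assms(2) unfolding pet_adj_def pet_verts_def by auto
qed

lemma pet_inner_cycle:
  assumes "k < n" "3 \<le> D" "n dvd D * k" and short: "\<And>e. 0 < e \<Longrightarrow> e < D \<Longrightarrow> \<not> n dvd e * k"
  shows "is_cycle (pet_adj n k) (map (\<lambda>i. (True, (i * k) mod n)) [0..<D])"
proof (rule is_cycle_map)
  show "3 \<le> D" by fact
  have "inj_on (\<lambda>i. (0 + i * k) mod n) {..D - 1}"
    by (rule inj_on_mod_progression) (use short in auto)
  then show "inj_on (\<lambda>i. (True, (i * k) mod n)) {..<D}"
    unfolding inj_on_def by fastforce
  show "pet_adj n k (True, (i * k) mod n) (True, ((i + 1) mod D * k) mod n)" if "i < D" for i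
  proof -
    have "((i + 1) mod D * k) mod n = (i * k + k) mod n"
    proof (cases "i + 1 < D")
      case False
      then have "i + 1 = D" using that by simp
      then show ?thesis using assms(3) unfolding \<open>i + 1 = D\<close>[symmetric] by (simp add: algebra_simps)
    qed (simp add: algebra_simps)
    then show ?thesis using pet_adj_inner_step[of k k n "i * k"] assms(1) by simp
  qed
qed

lemma pet_outer_cycle: "3 \<le> n \<Longrightarrow> is_cycle (pet_adj n k) (map (Pair False) [0..<n])"
  by (rule is_cycle_map) (auto simp: pet_adj_def pet_verts_def inj_on_def)

lemma pet_mixed_cycle:
  assumes "k < n" "0 < u" "u < n" "n dvd u + v * h" "h = k \<or> h = n - k"
    and short: "\<And>e. 0 < e \<Longrightarrow> e \<le> v \<Longrightarrow> \<not> n dvd e * h"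
  shows "\<exists>c. is_cycle (pet_adj n k) c \<and> length c = u + v + 2"
proof -
  define N where "N = u + v + 2"
  \<comment> \<open>the cycle u_0, ..., u_u, v_u, v_(u+h), ..., v_(u+vh) = v_0\<close>
  define f where "f i = (if i \<le> u then (False, i) else (True, (u + (i - u - 1) * h) mod n))" for i
  have prog: "inj_on (\<lambda>j. (u + j * h) mod n) {..v}"
    by (rule inj_on_mod_progression) (use short in auto)
  have "is_cycle (pet_adj n k) (map f [0..<N])"
  proof (rule is_cycle_map)
    show "3 \<le> N" using assms(2) unfolding N_def by simp
    show "inj_on f {..<N}"
    proof (rule linorder_inj_onI')
      fix i j assume ij: "i \<in> {..<N}" "j \<in> {..<N}" "i < j"
      have "i - u - 1 \<le> v" "j - u - 1 \<le> v" using ij unfolding N_def by auto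
      moreover have "i - u - 1 \<noteq> j - u - 1" if "u < i" using that ij by linarith
      ultimately show "f i \<noteq> f j"
        using inj_onD[OF prog, of "i - u - 1" "j - u - 1"] ij unfolding f_def by auto
    qed
    show "pet_adj n k (f i) (f ((i + 1) mod N))" if i_lt: "i < N" for i
    proof -
      consider "i < u" | "i = u" | "u < i" "i + 1 < N" | "i + 1 = N" using i_lt by linarith
      then show ?thesis
      proof cases
        case 1
        then show ?thesis using assms(3) unfolding f_def N_def pet_adj_def pet_verts_def by auto
      next
        case 2
        then show ?thesis using assms(3) unfolding f_def N_def pet_adj_def pet_verts_def by auto
      next
        case 3
        then have "i + 1 - u - 1 = Suc (i - u - 1)" by simp
        then have "f (i + 1) = (True, (u + (i - u - 1) * h + h) mod n)"
          using 3 unfolding f_def by (simp add: ac_simps)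
        then show ?thesis
          using 3 pet_adj_inner_step[OF assms(5,1), of "u + (i - u - 1) * h"] unfolding f_def by simp
      next
        case 4
        then have "f i = (True, 0)" "f ((i + 1) mod N) = (False, 0)"
          using assms(4) unfolding f_def N_def by auto
        then show ?thesis using assms(3) unfolding pet_adj_def pet_verts_def by simp
      qed
    qed
  qed
  then show ?thesis unfolding N_def by (intro exI[of _ "map f [0..<u + v + 2]"]) simp
qed

lemma pet_odd_cycle_of_trivial_combination:
  assumes k: "0 < k" "k < n" and min: "min_odd_combination n k U V" and triv: "U = 0 \<or> V = 0"
  shows "\<exists>c. is_cycle (pet_adj n k) c \<and> odd (length c) \<and> int (length c) \<le> \<bar>U\<bar> + \<bar>V\<bar>"
  using triv
proof
  assume U: "U = 0"
  have comb: "odd_combination n k 0 V" using min U unfolding min_odd_combination_def by blast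
  define D where "D = nat \<bar>V\<bar>"
  have "int (D * k) = \<bar>int k * V\<bar>" unfolding D_def by (simp add: abs_mult)
  then have "int n dvd int (D * k)" using comb unfolding odd_combination_def by simp
  then have dvd: "n dvd D * k" by (simp only: of_nat_dvd_iff)
  have odd_D: "odd D" using comb unfolding odd_combination_def D_def by (simp add: even_nat_iff)
  have short: "\<not> n dvd e * k" if "0 < e" "e < D" for e
  proof
    assume "n dvd e * k"
    then have "int n dvd int k * int e" by (metis int_dvd_int_iff mult.commute of_nat_mult)
    then show False
      using min_odd_combination_inner_multiple[OF min, of "int e"] that unfolding D_def
      by (auto simp: zless_nat_eq_int_zless)
  qed
  have "D \<noteq> 1" using dvd k by (auto dest: dvd_imp_le)
  then have "3 \<le> D" using odd_D by presburger
  then show ?thesis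
    using pet_inner_cycle[OF k(2) _ dvd short] odd_D U unfolding D_def by (intro exI) auto
next
  assume V: "V = 0"
  have "odd_combination n k U 0" using min V unfolding min_odd_combination_def by blast
  then have "n dvd nat \<bar>U\<bar>" "odd (nat \<bar>U\<bar>)"
    unfolding odd_combination_def by (simp_all add: even_nat_iff flip: of_nat_dvd_iff)
  then have "odd n" "n \<le> nat \<bar>U\<bar>" by (auto intro: dvd_trans dvd_imp_le)
  moreover have "3 \<le> n" using \<open>odd n\<close> k by presburger
  ultimately show ?thesis using pet_outer_cycle[of n k] V by (intro exI) auto
qed

lemma dvd_mult_complement:
  fixes e k n :: nat
  assumes "k \<le> n"
  shows "n dvd e * (n - k) \<longleftrightarrow> n dvd e * k"
proof -
  have "e * (n - k) + e * k = e * n" using assms by (simp add: diff_mult_distrib2)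
  then show ?thesis by (metis dvd_add_left_iff dvd_add_right_iff dvd_triv_right)
qed

lemma pet_odd_cycle_of_nontrivial_combination_pos:
  assumes k: "0 < k" "k < n" and min: "min_odd_combination n k U V" and "0 < U" "V \<noteq> 0"
  shows "\<exists>c. is_cycle (pet_adj n k) c \<and> odd (length c) \<and> int (length c) = \<bar>U\<bar> + \<bar>V\<bar> + 2"
proof -
  define u where "u = nat U"
  define v where "v = nat \<bar>V\<bar>"
  define h where "h = (if 0 < V then k else n - k)"
  have comb: "odd_combination n k U V" using min unfolding min_odd_combination_def by blast
  have u: "0 < u" "u < n"
    using min_odd_combination_outer_bound[OF min \<open>V \<noteq> 0\<close>] k \<open>0 < U\<close> unfolding u_def by auto
  have "int (u + v * h) = U + int k * V + (if 0 < V then 0 else int n * int v)"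
    using \<open>0 < U\<close> k(2) unfolding u_def v_def h_def by (auto simp: of_nat_diff algebra_simps)
  then have "int n dvd int (u + v * h)" using comb unfolding odd_combination_def by simp
  then have dvd: "n dvd u + v * h" by (simp only: of_nat_dvd_iff)
  have short: "\<not> n dvd e * h" if e: "0 < e" "e \<le> v" for e
  proof
    assume "n dvd e * h"
    then have "n dvd e * k" using k(2) unfolding h_def by (auto simp: dvd_mult_complement split: if_splits)
    then have "int n dvd int k * int e" by (metis int_dvd_int_iff mult.commute of_nat_mult)
    then show False
      using min_odd_combination_inner_multiple[OF min, of "int e"] e \<open>0 < U\<close> unfolding v_def
      by (auto simp: le_nat_iff)
  qed
  have "h = k \<or> h = n - k" unfolding h_def by simp
  then obtain c where c: "is_cycle (pet_adj n k) c" "length c = u + v + 2"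
    using pet_mixed_cycle[OF k(2) u dvd _ short] by blast
  then have len: "int (length c) = \<bar>U\<bar> + \<bar>V\<bar> + 2"
    using \<open>0 < U\<close> unfolding u_def v_def by auto
  then have "odd (int (length c))" using comb unfolding odd_combination_def by simp
  then have "odd (length c)" by simp
  with c(1) len show ?thesis by blast
qed

lemma pet_odd_cycle_of_nontrivial_combination:
  assumes k: "0 < k" "k < n" and min: "min_odd_combination n k U V" and "U \<noteq> 0" "V \<noteq> 0"
  shows "\<exists>c. is_cycle (pet_adj n k) c \<and> odd (length c) \<and> int (length c) = \<bar>U\<bar> + \<bar>V\<bar> + 2"
  using pet_odd_cycle_of_nontrivial_combination_pos[OF k, of U V]
    pet_odd_cycle_of_nontrivial_combination_pos[OF k, of "- U" "- V"] assms
  by (cases "0 < U") auto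

section \<open>The odd girth\<close>

lemma pet_has_odd_cycle_iff:
  assumes "0 < k" "k < n"
  shows "has_odd_cycle (pet_adj n k) \<longleftrightarrow> (\<exists>U V. odd_combination n k U V)"
proof
  assume "has_odd_cycle (pet_adj n k)"
  then show "\<exists>U V. odd_combination n k U V"
    unfolding has_odd_cycle_def using pet_odd_cycle_combination by blast
next
  assume "\<exists>U V. odd_combination n k U V"
  then obtain U V where min: "min_odd_combination n k U V"
    using min_odd_combination_exists by blast
  show "has_odd_cycle (pet_adj n k)"
  proof (cases "U = 0 \<or> V = 0")
    case True
    then show ?thesis
      using pet_odd_cycle_of_trivial_combination[OF assms min] unfolding has_odd_cycle_def by blast
  next
    case False
    then show ?thesis
      using pet_odd_cycle_of_nontrivial_combination[OF assms min] unfolding has_odd_cycle_def by blast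
  qed
qed

lemma pet_odd_cycle_length_ge:
  assumes min: "min_odd_combination n k U V"
    and cyc: "is_cycle (pet_adj n k) c" "odd (length c)"
  shows "\<bar>U\<bar> + \<bar>V\<bar> \<le> int (length c)"
    and "\<nexists>U' V'. min_odd_combination n k U' V' \<and> (U' = 0 \<or> V' = 0) \<Longrightarrow>
           \<bar>U\<bar> + \<bar>V\<bar> + 2 \<le> int (length c)"
proof -
  obtain U' V' where comb: "odd_combination n k U' V'"
    and len: "\<bar>U'\<bar> + \<bar>V'\<bar> \<le> int (length c)"
    and short: "U' = 0 \<or> V' = 0 \<or> \<bar>U'\<bar> + \<bar>V'\<bar> + 2 \<le> int (length c)"
    using pet_odd_cycle_combination[OF cyc] by blast
  have le: "\<bar>U\<bar> + \<bar>V\<bar> \<le> \<bar>U'\<bar> + \<bar>V'\<bar>" by (rule min_odd_combination_le[OF min comb])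
  with len show "\<bar>U\<bar> + \<bar>V\<bar> \<le> int (length c)" by simp
  assume no_triv: "\<nexists>U' V'. min_odd_combination n k U' V' \<and> (U' = 0 \<or> V' = 0)"
  show "\<bar>U\<bar> + \<bar>V\<bar> + 2 \<le> int (length c)"
  proof (cases "U' = 0 \<or> V' = 0")
    case True
    have "\<bar>U'\<bar> + \<bar>V'\<bar> \<noteq> \<bar>U\<bar> + \<bar>V\<bar>"
    proof
      assume "\<bar>U'\<bar> + \<bar>V'\<bar> = \<bar>U\<bar> + \<bar>V\<bar>"
      then have "min_odd_combination n k U' V'"
        using comb min_odd_combination_le[OF min] unfolding min_odd_combination_def by simp
      with True no_triv show False by blast
    qed
    moreover have "odd (\<bar>U\<bar> + \<bar>V\<bar>)" "odd (\<bar>U'\<bar> + \<bar>V'\<bar>)"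
      using min comb unfolding min_odd_combination_def odd_combination_def by blast+
    ultimately show ?thesis using le len by presburger
  next
    case False
    with short le show ?thesis by simp
  qed
qed

lemma pet_odd_girth:
  assumes k: "0 < k" "k < n" and min: "min_odd_combination n k U V"
  shows "\<exists>U' V'. min_odd_combination n k U' V' \<and> (U' = 0 \<or> V' = 0) \<Longrightarrow>
           int (odd_girth (pet_adj n k)) = \<bar>U\<bar> + \<bar>V\<bar>"
    and "\<nexists>U' V'. min_odd_combination n k U' V' \<and> (U' = 0 \<or> V' = 0) \<Longrightarrow>
           int (odd_girth (pet_adj n k)) = \<bar>U\<bar> + \<bar>V\<bar> + 2"
proof -
  assume "\<exists>U' V'. min_odd_combination n k U' V' \<and> (U' = 0 \<or> V' = 0)"
  then obtain U' V' where min': "min_odd_combination n k U' V'" and triv: "U' = 0 \<or> V' = 0"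
    by blast
  have same: "\<bar>U'\<bar> + \<bar>V'\<bar> = \<bar>U\<bar> + \<bar>V\<bar>"
    using min min' unfolding min_odd_combination_def by force
  obtain c where c: "is_cycle (pet_adj n k) c" "odd (length c)" "int (length c) \<le> \<bar>U\<bar> + \<bar>V\<bar>"
    using pet_odd_cycle_of_trivial_combination[OF k min' triv] same by auto
  have "odd_girth (pet_adj n k) = length c"
    by (rule odd_girth_eqI[OF c(1,2)]) (use pet_odd_cycle_length_ge(1)[OF min] c(3) in force)
  then show "int (odd_girth (pet_adj n k)) = \<bar>U\<bar> + \<bar>V\<bar>"
    using pet_odd_cycle_length_ge(1)[OF min c(1,2)] c(3) by simp
next
  assume no_triv: "\<nexists>U' V'. min_odd_combination n k U' V' \<and> (U' = 0 \<or> V' = 0)"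
  then have "U \<noteq> 0" "V \<noteq> 0" using min by blast+
  then obtain c where c: "is_cycle (pet_adj n k) c" "odd (length c)"
      "int (length c) = \<bar>U\<bar> + \<bar>V\<bar> + 2"
    using pet_odd_cycle_of_nontrivial_combination[OF k min] by blast
  have "odd_girth (pet_adj n k) = length c"
    by (rule odd_girth_eqI[OF c(1,2)]) (use pet_odd_cycle_length_ge(2)[OF min _ _ no_triv] c(3) in force)
  then show "int (odd_girth (pet_adj n k)) = \<bar>U\<bar> + \<bar>V\<bar> + 2" using c(3) by simp
qed

lemma ip_solution_odd_girth:
  assumes k: "0 < k" "k < n" and sol: "ip_solution n k u vp vm r t"
  shows "\<exists>u' vp' vm' r' t'. ip_solution n k u' vp' vm' r' t' \<and> ip_trivial u' vp' vm' \<Longrightarrow>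
           odd_girth (pet_adj n k) = 2 * r + 1"
    and "\<nexists>u' vp' vm' r' t'. ip_solution n k u' vp' vm' r' t' \<and> ip_trivial u' vp' vm' \<Longrightarrow>
           odd_girth (pet_adj n k) = 2 * r + 3"
proof -
  note girth = pet_odd_girth[OF k ip_solution_imp_min_odd_combination(1)[OF sol]]
  have objective: "int u + \<bar>int vp - int vm\<bar> = 2 * int r + 1"
    using sol ip_solution_imp_min_odd_combination(2)[OF sol]
    unfolding ip_solution_def ip_feasible_def by simp
  show "odd_girth (pet_adj n k) = 2 * r + 1"
    if "\<exists>u' vp' vm' r' t'. ip_solution n k u' vp' vm' r' t' \<and> ip_trivial u' vp' vm'"
    using girth(1) that objective unfolding ex_trivial_ip_solution_iff by simp
  show "odd_girth (pet_adj n k) = 2 * r + 3"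
    if "\<nexists>u' vp' vm' r' t'. ip_solution n k u' vp' vm' r' t' \<and> ip_trivial u' vp' vm'"
    using girth(2) that objective unfolding ex_trivial_ip_solution_iff by simp
qed

theorem theorem8:
  fixes n k :: nat
  assumes "2 < 2 * k" and "2 * k \<le> n"
  shows "((\<exists>u vp vm r t. ip_feasible n k u vp vm r t) \<longleftrightarrow> has_odd_cycle (pet_adj n k))
    \<and> (\<forall>u vp vm r t. ip_solution n k u vp vm r t \<longrightarrow>
         ((\<exists>u' vp' vm' r' t'. ip_solution n k u' vp' vm' r' t' \<and> ip_trivial u' vp' vm')
             \<longrightarrow> odd_girth (pet_adj n k) = 2 * r + 1)
       \<and> ((\<forall>u' vp' vm' r' t'. ip_solution n k u' vp' vm' r' t' \<longrightarrow> \<not> ip_trivial u' vp' vm')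
             \<longrightarrow> odd_girth (pet_adj n k) = 2 * r + 3))"
proof -
  have k: "0 < k" "k < n" using assms by simp_all
  show ?thesis
  proof (intro conjI allI impI)
    show "(\<exists>u vp vm r t. ip_feasible n k u vp vm r t) \<longleftrightarrow> has_odd_cycle (pet_adj n k)"
      using ex_ip_feasible_iff pet_has_odd_cycle_iff[OF k] by simp
  next
    fix u vp vm r t
    assume "ip_solution n k u vp vm r t"
      and "\<exists>u' vp' vm' r' t'. ip_solution n k u' vp' vm' r' t' \<and> ip_trivial u' vp' vm'"
    then show "odd_girth (pet_adj n k) = 2 * r + 1" by (rule ip_solution_odd_girth(1)[OF k])
  next
    fix u vp vm r t
    assume sol: "ip_solution n k u vp vm r t"
      and "\<forall>u' vp' vm' r' t'. ip_solution n k u' vp' vm' r' t' \<longrightarrow> \<not> ip_trivial u' vp' vm'"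
    then show "odd_girth (pet_adj n k) = 2 * r + 3" using ip_solution_odd_girth(2)[OF k sol] by blast
  qed
qed

end
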